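(* Let $k\ge1$, let $B\in\mathbb Z^{k\times k}$ with $\det B\ne0$, and let $\psi:B\mathbb Z^k\to\mathbb Z^k$, $z\mapsto Mz$, be a homomorphism given by a matrix $M\in\mathbb Q^{k\times k}$. Then \[R(\psi)=[\mathbb Z^k:B\mathbb Z^k]\cdot|\det(I_k-M)|_\infty .\]
   Context: $R(\psi)$ is the number of classes of the relation on $\mathbb Z^k$ given by $z_1\sim_\psi z_2\iff\exists z\in B\mathbb Z^k:\ z_1=z+z_2-\psi(z)$. $|a|_\infty=|a|$ if $a\neq0$ and $|0|_\infty=\infty$. *)

theory Defs
  imports "HOL-Analysis.Analysis"
begin

definition qvec :: "int ^ 'n \<Rightarrow> rat ^ 'n" where
  "qvec z = (\<chi> i. of_int (z $ i))"

definition num_classes :: "('a \<times> 'a) set \<Rightarrow> ereal" where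
  "num_classes r = (if finite (UNIV // r) then ereal (real (card (UNIV // r))) else \<infinity>)"

definition lattice_index :: "int ^ 'n ^ 'n \<Rightarrow> ereal" where
  "lattice_index B = num_classes {(z1, z2). z1 - z2 \<in> range (\<lambda>x. B *v x)}"

definition reidemeister_number :: "int ^ 'n ^ 'n \<Rightarrow> rat ^ 'n ^ 'n \<Rightarrow> ereal" where
  "reidemeister_number B M = num_classes
     {(z1, z2). \<exists>z \<in> range (\<lambda>x. B *v x). qvec z1 = qvec z + qvec z2 - M *v qvec z}"

definition abs_inf :: "rat \<Rightarrow> ereal" where
  "abs_inf a = (if a \<noteq> 0 then ereal (real_of_rat \<bar>a\<bar>) else \<infinity>)"

end

theory Submission
  imports Defs
begin

text \<open>Choosing integer vectors \<open>Y\<^sub>j = M B e\<^sub>j\<close>, the map \<open>z \<mapsto> z - \<psi>(z)\<close> on \<open>B\<int>\<^sup>k\<close> is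
  \<open>x \<mapsto> C x\<close> for the integer matrix \<open>C = B - Y = (I - M) B\<close>, so \<open>z\<^sub>1 \<sim>\<^sub>\<psi> z\<^sub>2\<close> iff
  \<open>z\<^sub>1 - z\<^sub>2 \<in> C\<int>\<^sup>k\<close> and \<open>R(\<psi>)\<close> is the index of the lattice \<open>C\<int>\<^sup>k\<close>. For any integer matrix \<open>A\<close>
  this index is \<open>|det A|\<^sub>\<infinity>\<close>: if \<open>det A \<noteq> 0\<close>, integer column operations make \<open>A\<close> lower triangular
  without changing \<open>A\<int>\<^sup>k\<close> or \<open>det A\<close>, and then the box \<open>0 \<le> z\<^sub>i < |A\<^sub>i\<^sub>i|\<close> is a system of
  representatives; if \<open>det A = 0\<close>, a nonzero rational \<open>w\<close> with \<open>w\<^sup>T A = 0\<close> gives the class invariant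
  \<open>z \<mapsto> w \<cdot> z\<close>, which takes infinitely many values. Multiplicativity of \<open>det\<close> and of
  \<open>|\<cdot>|\<^sub>\<infinity>\<close> finishes the proof.\<close>

section \<open>Integer column operations\<close>

lemma matrix_vector_mult_axis_nth: "(A *v axis a t) $ i = A$i$a * t"
  by (simp add: matrix_vector_mult_def axis_def if_distrib sum.delta cong: if_cong)

definition col_add :: "'a::comm_ring_1^'n^'m \<Rightarrow> 'n \<Rightarrow> 'n \<Rightarrow> 'a \<Rightarrow> 'a^'n^'m" where
  "col_add A a b c = (\<chi> i j. if j = b then A$i$b + c * A$i$a else A$i$j)"

lemma col_add_nth: "col_add A a b c $ i $ j = (if j = b then A$i$b + c * A$i$a else A$i$j)"
  by (simp add: col_add_def)

lemma col_add_mult_vec: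
  assumes "a \<noteq> b"
  shows "col_add A a b c *v x = A *v (x + axis a (c * x$b))"
proof -
  have "(col_add A a b c *v x) $ i = (\<Sum>j\<in>UNIV. A$i$j * x$j + (if j = b then c * A$i$a * x$b else 0))" for i
    unfolding matrix_vector_mult_def col_add_def by (auto intro!: sum.cong simp: algebra_simps)
  then have "(col_add A a b c *v x) $ i = (A *v x) $ i + A$i$a * (c * x$b)" for i
    by (simp add: sum.distrib matrix_vector_mult_def algebra_simps)
  then show ?thesis
    by (simp add: vec_eq_iff matrix_vector_right_distrib matrix_vector_mult_axis_nth)
qed

lemma col_add_col_add_neg: "a \<noteq> b \<Longrightarrow> col_add (col_add A a b c) a b (- c) = A"
  by (simp add: col_add_def vec_eq_iff)

lemma range_col_add:
  assumes "a \<noteq> b"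
  shows "range ((*v) (col_add A a b c)) = range ((*v) A)"
proof -
  have sub: "range ((*v) (col_add A' a b c')) \<subseteq> range ((*v) A')" for A' c'
    using col_add_mult_vec[OF assms] by auto
  show ?thesis
    using sub[of A c] sub[of "col_add A a b c" "- c"] by (simp add: col_add_col_add_neg[OF assms])
qed

lemma det_col_add:
  assumes "a \<noteq> b"
  shows "det (col_add A a b c) = det A"
proof -
  have "transpose (col_add A a b c)
      = (\<chi> k. if k = b then row b (transpose A) + c *s row a (transpose A) else row k (transpose A))"
    by (simp add: vec_eq_iff col_add_def transpose_def row_def)
  then show ?thesis
    using det_row_operation[of b a "transpose A" c] assms by (metis det_transpose)
qed

inductive col_reachable :: "'n set \<Rightarrow> 'a::comm_ring_1^'n^'n \<Rightarrow> 'a^'n^'n \<Rightarrow> bool"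
  for S :: "'n set" where
  self: "col_reachable S A A"
| col_add: "col_reachable S A A' \<Longrightarrow> a \<in> S \<Longrightarrow> b \<in> S \<Longrightarrow> a \<noteq> b
    \<Longrightarrow> col_reachable S A (col_add A' a b c)"

lemma col_reachable_trans:
  assumes "col_reachable S A A'" "col_reachable S A' A''"
  shows "col_reachable S A A''"
  using assms(2,1) by induction (auto intro: col_reachable.col_add)

lemma col_reachable_mono:
  "col_reachable S A A' \<Longrightarrow> S \<subseteq> T \<Longrightarrow> col_reachable T A A'"
  by (induction rule: col_reachable.induct) (auto intro: col_reachable.intros)

lemma col_reachable_range:
  "col_reachable S A A' \<Longrightarrow> range ((*v) A') = range ((*v) A)"
  by (induction rule: col_reachable.induct) (simp_all add: range_col_add)

lemma col_reachable_det: "col_reachable S A A' \<Longrightarrow> det A' = det A"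
  by (induction rule: col_reachable.induct) (simp_all add: det_col_add)

lemma col_reachable_col_outside:
  "col_reachable S A A' \<Longrightarrow> j \<notin> S \<Longrightarrow> A'$r$j = A$r$j"
  by (induction rule: col_reachable.induct) (auto simp: col_add_nth)

lemma col_reachable_zero_row:
  "col_reachable S A A' \<Longrightarrow> \<forall>j\<in>S. A$r$j = 0 \<Longrightarrow> j \<in> S \<Longrightarrow> A'$r$j = 0"
  by (induction arbitrary: j rule: col_reachable.induct) (auto simp: col_add_nth)

lemma col_add_shrinks_entry:
  fixes A :: "int^'n^'n"
  assumes "A$i$a \<noteq> 0" "\<bar>A$i$a\<bar> \<le> \<bar>A$i$b\<bar>"
  shows "\<bar>col_add A a b (- sgn (A$i$a) * sgn (A$i$b)) $ i $ b\<bar> = \<bar>A$i$b\<bar> - \<bar>A$i$a\<bar>"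
proof -
  have "col_add A a b (- sgn (A$i$a) * sgn (A$i$b)) $ i $ b = A$i$b - sgn (A$i$b) * \<bar>A$i$a\<bar>"
    by (simp add: col_add_nth abs_mult_sgn algebra_simps abs_sgn mult.commute)
  moreover have "A$i$b \<noteq> 0" using assms by auto
  ultimately show ?thesis
    using assms by (cases "A$i$b > 0") (auto simp: abs_if sgn_if)
qed

lemma col_reachable_move_entry:
  assumes "a \<in> S" "p \<in> S" "a \<noteq> p" "\<forall>j\<in>S - {a}. A$i$j = 0"
  shows "col_reachable S A (col_add (col_add A a p 1) p a (- 1))"
    and "\<forall>j\<in>S - {p}. col_add (col_add A a p 1) p a (- 1) $ i $ j = 0"
  using assms by (auto simp: col_add_nth intro!: col_reachable.intros)

lemma clear_row:
  fixes A :: "int^'n^'n"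
  assumes "p \<in> S"
  shows "\<exists>A'. col_reachable S A A' \<and> (\<forall>j\<in>S - {p}. A'$i$j = 0)"
  \<comment> \<open>Euclid's algorithm on row \<open>i\<close>: subtracting the smaller of two nonzero entries from the larger
    decreases \<open>\<Sum>|A\<^sub>i\<^sub>j|\<close>; once a single nonzero entry is left, it is moved to column \<open>p\<close>.\<close>
proof (induction "\<Sum>j\<in>S. nat \<bar>A$i$j\<bar>" arbitrary: A rule: less_induct)
  case less
  show ?case
  proof (cases "\<exists>a\<in>S. \<exists>b\<in>S. a \<noteq> b \<and> A$i$a \<noteq> 0 \<and> A$i$b \<noteq> 0")
    case True
    then obtain a b where ab: "a \<in> S" "b \<in> S" "a \<noteq> b" "A$i$a \<noteq> 0" "\<bar>A$i$a\<bar> \<le> \<bar>A$i$b\<bar>"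
      by (metis linorder_le_cases)
    define A1 where "A1 = col_add A a b (- sgn (A$i$a) * sgn (A$i$b))"
    have reach: "col_reachable S A A1"
      unfolding A1_def using ab by (intro col_reachable.intros)
    have "(\<Sum>j\<in>S. nat \<bar>A1$i$j\<bar>) = nat \<bar>A1$i$b\<bar> + (\<Sum>j\<in>S - {b}. nat \<bar>A$i$j\<bar>)"
      using ab(2,3) by (simp add: sum.remove A1_def col_add_nth)
    also have "\<dots> < (\<Sum>j\<in>S. nat \<bar>A$i$j\<bar>)"
      using ab col_add_shrinks_entry[of A i a b] by (simp add: sum.remove[of S b] A1_def)
    finally obtain A' where "col_reachable S A1 A'" "\<forall>j\<in>S - {p}. A'$i$j = 0"
      using less.hyps by blast
    then show ?thesis using reach col_reachable_trans by blast
  next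
    case False
    show ?thesis
    proof (cases "\<exists>a\<in>S - {p}. A$i$a \<noteq> 0")
      case True
      then obtain a where a: "a \<in> S" "a \<noteq> p" "A$i$a \<noteq> 0" by blast
      with False have "\<forall>j\<in>S - {a}. A$i$j = 0" by blast
      then show ?thesis using col_reachable_move_entry[OF a(1) assms a(2)] by blast
    qed (auto intro: col_reachable.self)
  qed
qed

section \<open>Triangular form\<close>

text \<open>The index type carries no order, so triangularity is taken with respect to an injective
  ranking \<open>rk\<close> of the indices.\<close>

definition lower_triangular_wrt :: "('n \<Rightarrow> nat) \<Rightarrow> 'a::zero^'n^'n \<Rightarrow> bool" where
  "lower_triangular_wrt rk A \<longleftrightarrow> (\<forall>i j. rk i < rk j \<longrightarrow> A$i$j = 0)"

lemma col_reachable_lower_rows: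
  fixes A :: "int^'n^'n" and rk :: "'n \<Rightarrow> nat"
  assumes "inj rk"
  shows "\<exists>A'. col_reachable UNIV A A' \<and> (\<forall>i j. rk i < k \<and> rk i < rk j \<longrightarrow> A'$i$j = 0)"
  \<comment> \<open>Rows are cleared in order of rank; clearing row \<open>p\<close> only touches columns of rank \<open>\<ge> rk p\<close>,
    where the rows of smaller rank already vanish.\<close>
proof (induction k)
  case 0
  show ?case by (auto intro: col_reachable.self)
next
  case (Suc k)
  then obtain A' where A': "col_reachable UNIV A A'"
    and upper: "\<forall>i j. rk i < k \<and> rk i < rk j \<longrightarrow> A'$i$j = 0" by blast
  show ?case
  proof (cases "k \<in> range rk")
    case False
    then have "rk i < Suc k \<longleftrightarrow> rk i < k" for i by (metis less_Suc_eq rangeI)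
    with A' upper show ?thesis by metis
  next
    case True
    then obtain p where p: "rk p = k" by blast
    define S where "S = {j. k \<le> rk j}"
    obtain A'' where A'': "col_reachable S A' A''" and row_p: "\<forall>j\<in>S - {p}. A''$p$j = 0"
      using clear_row[of p S A' p] p by (auto simp: S_def)
    have "A''$i$j = 0" if "rk i < Suc k" "rk i < rk j" for i j
    proof (cases "rk i < k")
      case True
      show ?thesis
      proof (cases "j \<in> S")
        case True
        have "\<forall>j\<in>S. A'$i$j = 0" using upper \<open>rk i < k\<close> by (auto simp: S_def)
        then show ?thesis using col_reachable_zero_row[OF A''] True by blast
      next
        case False
        with A'' upper that \<open>rk i < k\<close> show ?thesis by (simp add: col_reachable_col_outside)
      qed
    next
      case False
      with that p assms have "i = p" by (metis inj_eq less_SucE)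
      with that p row_p show ?thesis by (auto simp: S_def)
    qed
    with A' A'' show ?thesis by (blast intro: col_reachable_trans col_reachable_mono)
  qed
qed

lemma lower_triangularization:
  fixes A :: "int^'n^'n" and rk :: "'n \<Rightarrow> nat"
  assumes "inj rk"
  obtains A' where "range ((*v) A') = range ((*v) A)" "det A' = det A" "lower_triangular_wrt rk A'"
proof -
  have "rk i < Suc (Max (range rk))" for i by (simp add: le_imp_less_Suc)
  with col_reachable_lower_rows[OF assms, of A "Suc (Max (range rk))"] obtain A'
    where "col_reachable UNIV A A'" "lower_triangular_wrt rk A'"
    unfolding lower_triangular_wrt_def by metis
  with that show ?thesis using col_reachable_range col_reachable_det by blast
qed

lemma permutes_rank_decreasing_eq_id:
  fixes rk :: "'n \<Rightarrow> nat"
  assumes "inj rk" "p permutes UNIV" "\<forall>i. rk (p i) \<le> rk i"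
  shows "p = id"
proof -
  have "p i = i" for i
  proof (induction "rk i" arbitrary: i rule: less_induct)
    case less
    show ?case
    proof (cases "rk (p i) < rk i")
      case True
      then have "p (p i) = p i" using less by blast
      then show ?thesis using permutes_inj[OF assms(2)] by (metis injD)
    next
      case False
      then show ?thesis using assms(1,3) by (metis injD le_antisym not_less)
    qed
  qed
  then show ?thesis by auto
qed

lemma det_lower_triangular_wrt:
  fixes A :: "'a::comm_ring_1^'n^'n"
  assumes "inj rk" "lower_triangular_wrt rk A"
  shows "det A = (\<Prod>i\<in>UNIV. A$i$i)"
proof -
  have "(\<Prod>i\<in>UNIV. A$i$p i) = 0" if p: "p permutes UNIV" and "p \<noteq> id" for p
  proof -
    obtain i where "rk i < rk (p i)"
      using permutes_rank_decreasing_eq_id[OF assms(1) p] \<open>p \<noteq> id\<close> by (metis not_le)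
    with assms(2) have "A$i$p i = 0" by (simp add: lower_triangular_wrt_def)
    then show ?thesis by (intro prod_zero) auto
  qed
  then have "det A = (\<Sum>p\<in>{p. p permutes UNIV}. if p = id then of_int (sign p) * (\<Prod>i\<in>UNIV. A$i$p i) else 0)"
    unfolding det_def by (intro sum.cong) auto
  also have "\<dots> = (\<Prod>i\<in>UNIV. A$i$i)"
    by (simp add: sum.delta' permutes_id sign_id)
  finally show ?thesis .
qed

section \<open>Cosets of integer lattices\<close>

lemma bij_betw_representatives_quotient:
  assumes "equiv A r" "R \<subseteq> A"
    and "\<And>x. x \<in> A \<Longrightarrow> \<exists>y\<in>R. (x, y) \<in> r"
    and "\<And>y y'. y \<in> R \<Longrightarrow> y' \<in> R \<Longrightarrow> (y, y') \<in> r \<Longrightarrow> y = y'"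
  shows "bij_betw (\<lambda>y. r `` {y}) R (A // r)"
proof (rule bij_betw_imageI)
  show "inj_on (\<lambda>y. r `` {y}) R"
    using assms(1,2,4) by (intro inj_onI) (metis eq_equiv_class subsetD)
  show "(\<lambda>y. r `` {y}) ` R = A // r"
  proof
    show "(\<lambda>y. r `` {y}) ` R \<subseteq> A // r"
      using assms(2) by (auto intro: quotientI)
    show "A // r \<subseteq> (\<lambda>y. r `` {y}) ` R"
      using assms(1,3) by (auto elim!: quotientE simp: equiv_class_eq_iff)
  qed
qed

lemma card_int_box:
  fixes d :: "'n::finite \<Rightarrow> int"
  shows "finite {z :: int^'n. \<forall>i. 0 \<le> z$i \<and> z$i < d i}"
    and "card {z :: int^'n. \<forall>i. 0 \<le> z$i \<and> z$i < d i} = (\<Prod>i\<in>UNIV. nat (d i))"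
proof -
  have box: "{z :: int^'n. \<forall>i. 0 \<le> z$i \<and> z$i < d i} = vec_lambda ` (\<Pi>\<^sub>E i\<in>UNIV. {0..<d i})"
  proof
    show "{z :: int^'n. \<forall>i. 0 \<le> z$i \<and> z$i < d i} \<subseteq> vec_lambda ` (\<Pi>\<^sub>E i\<in>UNIV. {0..<d i})"
    proof
      fix z :: "int^'n"
      assume "z \<in> {z. \<forall>i. 0 \<le> z$i \<and> z$i < d i}"
      then have "vec_nth z \<in> (\<Pi>\<^sub>E i\<in>UNIV. {0..<d i})" by auto
      then show "z \<in> vec_lambda ` (\<Pi>\<^sub>E i\<in>UNIV. {0..<d i})" by (metis image_eqI vec_nth_inverse)
    qed
  qed (auto simp: PiE_iff)
  show "finite {z :: int^'n. \<forall>i. 0 \<le> z$i \<and> z$i < d i}"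
    unfolding box by (intro finite_imageI finite_PiE) auto
  have "inj_on vec_lambda (\<Pi>\<^sub>E i\<in>UNIV. {0..<d i})"
    by (simp add: inj_on_def)
  then show "card {z :: int^'n. \<forall>i. 0 \<le> z$i \<and> z$i < d i} = (\<Prod>i\<in>UNIV. nat (d i))"
    unfolding box by (simp add: card_image card_PiE)
qed

definition lattice_rel :: "'a::ring_1^'n^'m \<Rightarrow> (('a^'m) \<times> ('a^'m)) set" where
  "lattice_rel A = {(z1, z2). z1 - z2 \<in> range (\<lambda>x. A *v x)}"

lemma equiv_lattice_rel: "equiv UNIV (lattice_rel A)"
proof (rule equivI)
  show "refl (lattice_rel A)"
    by (auto simp: refl_on_def lattice_rel_def intro: range_eqI[of _ _ 0])
  show "sym (lattice_rel A)"
  proof (rule symI)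
    fix x y assume "(x, y) \<in> lattice_rel A"
    then obtain u where "x - y = A *v u" by (auto simp: lattice_rel_def)
    then have "y - x = A *v (- u)"
      by (metis matrix_vector_mult_diff_distrib minus_diff_eq diff_0 matrix_vector_mult_0_right)
    then show "(y, x) \<in> lattice_rel A" by (auto simp: lattice_rel_def)
  qed
  show "trans (lattice_rel A)"
  proof (rule transI)
    fix x y z assume "(x, y) \<in> lattice_rel A" "(y, z) \<in> lattice_rel A"
    then obtain u v where uv: "x - y = A *v u" "y - z = A *v v" by (auto simp: lattice_rel_def)
    have "x - z = (x - y) + (y - z)" by simp
    also have "\<dots> = A *v (u + v)" by (simp only: uv matrix_vector_right_distrib)
    finally have "x - z = A *v (u + v)" .
    then show "(x, z) \<in> lattice_rel A" by (auto simp: lattice_rel_def)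
  qed
qed auto

lemma lower_triangular_lattice_rep:
  fixes A :: "int^'n^'n"
  assumes "inj rk" "lower_triangular_wrt rk A" "\<forall>i. A$i$i \<noteq> 0"
  shows "\<exists>x. \<forall>i. 0 \<le> (z - A *v x)$i \<and> (z - A *v x)$i < \<bar>A$i$i\<bar>"
  \<comment> \<open>Coordinates are reduced modulo \<open>|A\<^sub>p\<^sub>p|\<close> in order of rank; adding a multiple of column \<open>p\<close>
    does not change coordinates of smaller rank.\<close>
proof -
  have "\<exists>x. \<forall>i. rk i < k \<longrightarrow> 0 \<le> (z - A *v x)$i \<and> (z - A *v x)$i < \<bar>A$i$i\<bar>" for k
  proof (induction k)
    case (Suc k)
    then obtain x where x: "\<forall>i. rk i < k \<longrightarrow> 0 \<le> (z - A *v x)$i \<and> (z - A *v x)$i < \<bar>A$i$i\<bar>"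
      by blast
    show ?case
    proof (cases "k \<in> range rk")
      case False
      with x show ?thesis by (metis less_Suc_eq rangeI)
    next
      case True
      then obtain p where p: "rk p = k" by blast
      define w where "w = (z - A *v x)$p"
      define t where "t = sgn (A$p$p) * (w div \<bar>A$p$p\<bar>)"
      have shift: "(z - A *v (x + axis p t))$j = (z - A *v x)$j - A$j$p * t" for j
        by (simp add: matrix_vector_right_distrib matrix_vector_mult_axis_nth)
      have "A$p$p * t = \<bar>A$p$p\<bar> * (w div \<bar>A$p$p\<bar>)"
        unfolding t_def by (simp add: abs_sgn mult.assoc[symmetric] mult.commute)
      then have "(z - A *v (x + axis p t))$p = w mod \<bar>A$p$p\<bar>"
        using shift[of p] unfolding w_def by (simp add: minus_div_mult_eq_mod[symmetric] mult.commute)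
      then have "0 \<le> (z - A *v (x + axis p t))$j \<and> (z - A *v (x + axis p t))$j < \<bar>A$j$j\<bar>"
        if "rk j < Suc k" for j
      proof (cases "j = p")
        case False
        with that p assms(1) have "rk j < k" by (metis inj_eq less_SucE)
        with p assms(2) have "A$j$p = 0" by (simp add: lower_triangular_wrt_def)
        with shift[of j] x \<open>rk j < k\<close> show ?thesis by simp
      qed (use assms(3) in simp)
      then show ?thesis by blast
    qed
  qed simp
  moreover have "rk i < Suc (Max (range rk))" for i
    by (simp add: le_imp_less_Suc)
  ultimately show ?thesis by meson
qed

lemma lower_triangular_lattice_rep_unique:
  fixes A :: "int^'n^'n"
  assumes "inj rk" "lower_triangular_wrt rk A"
    and "\<forall>i. 0 \<le> r$i \<and> r$i < \<bar>A$i$i\<bar>" "\<forall>i. 0 \<le> r'$i \<and> r'$i < \<bar>A$i$i\<bar>"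
    and "r - r' = A *v x"
  shows "r = r'"
proof -
  have "x$i = 0" for i
  proof (induction "rk i" arbitrary: i rule: less_induct)
    case less
    have entry: "A$i$j * x$j = (if j = i then A$i$i * x$i else 0)" for j
    proof (cases "rk j < rk i")
      case False
      with assms(1,2) have "j = i \<or> A$i$j = 0"
        by (metis inj_eq linorder_neqE_nat lower_triangular_wrt_def)
      then show ?thesis by auto
    qed (use less in auto)
    have "r$i - r'$i = (A *v x)$i"
      using assms(5) by (metis vector_minus_component)
    also have "\<dots> = (\<Sum>j\<in>UNIV. if j = i then A$i$i * x$i else 0)"
      unfolding matrix_vector_mult_def vec_lambda_beta by (rule sum.cong[OF refl entry])
    finally have "r$i - r'$i = A$i$i * x$i" by simp
    moreover have "\<bar>r$i - r'$i\<bar> < \<bar>A$i$i\<bar>"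
      using assms(3,4)[rule_format, of i] unfolding abs_less_iff by linarith
    ultimately have "\<bar>A$i$i\<bar> * \<bar>x$i\<bar> < \<bar>A$i$i\<bar> * 1" by (simp add: abs_mult)
    then show "x$i = 0"
      by (metis abs_ge_zero int_one_le_iff_zero_less linorder_not_less mult_left_mono zero_less_abs_iff)
  qed
  then have "x = 0" by (simp add: vec_eq_iff)
  with assms(5) show ?thesis by simp
qed

lemma card_lattice_classes_lower_triangular:
  fixes A :: "int^'n^'n"
  assumes "inj rk" "lower_triangular_wrt rk A" "\<forall>i. A$i$i \<noteq> 0"
  shows "finite (UNIV // lattice_rel A)" "card (UNIV // lattice_rel A) = (\<Prod>i\<in>UNIV. nat \<bar>A$i$i\<bar>)"
proof -
  let ?R = "{z :: int^'n. \<forall>i. 0 \<le> z$i \<and> z$i < \<bar>A$i$i\<bar>}"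
  have "bij_betw (\<lambda>y. lattice_rel A `` {y}) ?R (UNIV // lattice_rel A)"
  proof (rule bij_betw_representatives_quotient[OF equiv_lattice_rel])
    show "\<exists>y\<in>?R. (z, y) \<in> lattice_rel A" for z
    proof -
      obtain x where "\<forall>i. 0 \<le> (z - A *v x)$i \<and> (z - A *v x)$i < \<bar>A$i$i\<bar>"
        using lower_triangular_lattice_rep[OF assms] by blast
      then show ?thesis by (intro bexI[of _ "z - A *v x"]) (auto simp: lattice_rel_def)
    qed
    show "y = y'" if "y \<in> ?R" "y' \<in> ?R" "(y, y') \<in> lattice_rel A" for y y'
    proof -
      from that(3) obtain x where "y - y' = A *v x" by (auto simp: lattice_rel_def)
      with that(1,2) show ?thesis by (auto intro: lower_triangular_lattice_rep_unique[OF assms(1,2)])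
    qed
  qed simp
  then have "finite (UNIV // lattice_rel A) \<longleftrightarrow> finite ?R" "card (UNIV // lattice_rel A) = card ?R"
    by (simp_all add: bij_betw_finite bij_betw_same_card)
  with card_int_box[of "\<lambda>i. \<bar>A$i$i\<bar>"]
  show "finite (UNIV // lattice_rel A)" "card (UNIV // lattice_rel A) = (\<Prod>i\<in>UNIV. nat \<bar>A$i$i\<bar>)"
    by simp_all
qed

lemma card_lattice_classes_nonsingular:
  fixes A :: "int^'n^'n"
  assumes "det A \<noteq> 0"
  shows "finite (UNIV // lattice_rel A)" "int (card (UNIV // lattice_rel A)) = \<bar>det A\<bar>"
proof -
  obtain rk :: "'n \<Rightarrow> nat" where rk: "inj rk"
    using ex_inj by blast
  obtain T where T: "range ((*v) T) = range ((*v) A)" "det T = det A" "lower_triangular_wrt rk T"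
    using lower_triangularization[OF rk] by blast
  have "lattice_rel T = lattice_rel A"
    using T(1) by (simp add: lattice_rel_def)
  moreover have "det T = (\<Prod>i\<in>UNIV. T$i$i)"
    using det_lower_triangular_wrt[OF rk T(3)] .
  moreover from this have "\<forall>i. T$i$i \<noteq> 0"
    using T(2) assms by auto
  ultimately show "finite (UNIV // lattice_rel A)" "int (card (UNIV // lattice_rel A)) = \<bar>det A\<bar>"
    using card_lattice_classes_lower_triangular[OF rk T(3)] T(2) by (simp_all add: abs_prod)
qed

section \<open>Reduction of the Reidemeister relation to a lattice\<close>

definition qmat :: "int^'n^'m \<Rightarrow> rat^'n^'m" where
  "qmat A = (\<chi> i j. of_int (A$i$j))"

lemma qvec_mult: "qvec (A *v x) = qmat A *v qvec x"
  by (simp add: vec_eq_iff qvec_def qmat_def matrix_vector_mult_def)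

lemma qvec_eq_iff: "qvec x = qvec y \<longleftrightarrow> x = y"
  by (simp add: qvec_def vec_eq_iff)

lemma qvec_add: "qvec (x + y) = qvec x + qvec y"
  by (simp add: qvec_def vec_eq_iff)

lemma qmat_diff: "qmat (A - B) = qmat A - qmat B"
  by (simp add: qmat_def vec_eq_iff)

lemma det_qmat: "det (qmat A) = of_int (det A)"
  unfolding det_def qmat_def by simp

lemma infinite_lattice_classes_singular:
  fixes A :: "int^'n^'n"
  assumes "det A = 0"
  shows "infinite (UNIV // lattice_rel A)"
proof -
  have "\<not> invertible (transpose (qmat A))"
    using assms by (simp add: invertible_det_nz det_qmat)
  then obtain w where w: "w \<noteq> 0" "transpose (qmat A) *v w = 0"
    using invertible_left_inverse matrix_left_invertible_ker by blast
  then obtain i0 where i0: "w$i0 \<noteq> 0"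
    by (metis vec_eq_iff zero_index)
  define \<phi> where "\<phi> z = (\<Sum>i\<in>UNIV. w$i * qvec z $ i)" for z
  have \<phi>_inv: "\<phi> z1 = \<phi> z2" if rel: "(z1, z2) \<in> lattice_rel A" for z1 z2
  proof -
    obtain x where x: "z1 - z2 = A *v x"
      using rel by (auto simp: lattice_rel_def)
    have "\<phi> z1 - \<phi> z2 = (\<Sum>i\<in>UNIV. w$i * qvec (z1 - z2) $ i)"
      unfolding \<phi>_def by (simp add: sum_subtractf[symmetric] right_diff_distrib qvec_def)
    also have "\<dots> = (\<Sum>i\<in>UNIV. \<Sum>j\<in>UNIV. w$i * (qmat A$i$j * qvec x$j))"
      unfolding x qvec_mult by (simp add: matrix_vector_mult_def sum_distrib_left)
    also have "\<dots> = (\<Sum>j\<in>UNIV. \<Sum>i\<in>UNIV. w$i * (qmat A$i$j * qvec x$j))"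
      by (rule sum.swap)
    also have "\<dots> = (\<Sum>j\<in>UNIV. (transpose (qmat A) *v w)$j * qvec x $ j)"
      by (simp add: matrix_vector_mult_def transpose_def sum_distrib_left sum_distrib_right mult_ac)
    also have "\<dots> = 0" using w(2) by simp
    finally show ?thesis by simp
  qed
  have \<phi>_axis: "\<phi> (axis i0 (int t)) = w$i0 * of_nat t" for t
    unfolding \<phi>_def qvec_def axis_def by (simp add: if_distrib sum.delta cong: if_cong)
  have "inj (\<lambda>t. lattice_rel A `` {axis i0 (int t)})"
  proof (rule injI)
    fix s t assume "lattice_rel A `` {axis i0 (int s)} = lattice_rel A `` {axis i0 (int t)}"
    then have "(axis i0 (int s), axis i0 (int t)) \<in> lattice_rel A"
      using equiv_class_eq_iff[OF equiv_lattice_rel] by blast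
    then have "w$i0 * of_nat s = w$i0 * of_nat t"
      using \<phi>_inv \<phi>_axis by metis
    with i0 show "s = t" by simp
  qed
  moreover have "range (\<lambda>t. lattice_rel A `` {axis i0 (int t)}) \<subseteq> UNIV // lattice_rel A"
    by (auto intro: quotientI)
  ultimately show ?thesis
    using finite_subset range_inj_infinite by blast
qed

lemma num_classes_lattice_rel:
  fixes A :: "int^'n^'n"
  shows "num_classes (lattice_rel A) = abs_inf (of_int (det A))"
proof (cases "det A = 0")
  case True
  then show ?thesis
    using infinite_lattice_classes_singular by (simp add: num_classes_def abs_inf_def)
next
  case False
  have "real (card (UNIV // lattice_rel A)) = real_of_rat \<bar>of_int (det A)\<bar>"
    by (metis card_lattice_classes_nonsingular(2)[OF False] of_int_of_nat_eq of_rat_of_int_eq of_int_abs)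
  with False show ?thesis
    using card_lattice_classes_nonsingular(1)[OF False] by (simp add: num_classes_def abs_inf_def)
qed

lemma abs_inf_mult: "abs_inf (a * b) = abs_inf a * abs_inf b"
  by (auto simp: abs_inf_def abs_mult of_rat_mult)

lemma lattice_index_eq_abs_inf_det: "lattice_index B = abs_inf (of_int (det B))"
  using num_classes_lattice_rel[of B] by (simp add: lattice_index_def lattice_rel_def)

lemma matrix_diff_mult: "(A - B) ** C = A ** C - B ** (C :: 'a::ring_1^'n^'m)"
  by (simp add: vec_eq_iff matrix_matrix_mult_def left_diff_distrib sum_subtractf)

lemma qvec_axis: "qvec (axis j 1) = axis j 1"
  by (simp add: qvec_def axis_def vec_eq_iff)

lemma integral_product_matrix:
  assumes "\<forall>z \<in> range (\<lambda>x. B *v x). \<exists>y. M *v qvec z = qvec y"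
  obtains Y where "qmat Y = M ** qmat B"
proof -
  from assms have "\<forall>j. \<exists>y. M *v qvec (B *v axis j 1) = qvec y"
    by blast
  then obtain Y where Y: "\<And>j. M *v qvec (B *v axis j 1) = qvec (Y j)"
    by metis
  have "(M ** qmat B)$i$j = of_int (Y j $ i)" for i j
  proof -
    have "(M ** qmat B)$i$j = ((M ** qmat B) *v axis j 1)$i"
      by (simp add: matrix_vector_mult_axis_nth)
    also have "\<dots> = qvec (Y j) $ i"
      by (simp add: Y[symmetric] qvec_mult qvec_axis matrix_vector_mul_assoc)
    finally show ?thesis by (simp add: qvec_def)
  qed
  then have "qmat (\<chi> i j. Y j $ i) = M ** qmat B"
    by (simp add: vec_eq_iff qmat_def)
  then show ?thesis using that by blast
qed

lemma reidemeister_rel_eq_lattice_rel: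
  assumes "qmat C = (mat 1 - M) ** qmat B"
  shows "{(z1, z2). \<exists>z \<in> range (\<lambda>x. B *v x). qvec z1 = qvec z + qvec z2 - M *v qvec z} = lattice_rel C"
proof -
  have "qvec (B *v x) + qvec z2 - M *v qvec (B *v x) = qvec (z2 + C *v x)" for x z2
  proof -
    have "qvec (B *v x) - M *v qvec (B *v x) = qvec (C *v x)"
      by (simp add: assms qvec_mult matrix_diff_mult matrix_vector_mult_diff_rdistrib
          matrix_vector_mul_assoc)
    then show ?thesis by (simp add: qvec_add algebra_simps)
  qed
  then show ?thesis
    unfolding lattice_rel_def by (auto simp: qvec_eq_iff algebra_simps)
qed

theorem mainTheorem6:
  fixes B :: "int ^ 'n ^ 'n" and M :: "rat ^ 'n ^ 'n"
  assumes "det B \<noteq> 0"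
    and "\<forall>z \<in> range (\<lambda>x. B *v x). \<exists>y :: int ^ 'n. M *v qvec z = qvec y"
  shows "reidemeister_number B M = lattice_index B * abs_inf (det (mat 1 - M))"
proof -
  obtain Y where Y: "qmat Y = M ** qmat B"
    using integral_product_matrix[OF assms(2)] .
  have C: "qmat (B - Y) = (mat 1 - M) ** qmat B"
    by (simp add: qmat_diff Y matrix_diff_mult)
  have "reidemeister_number B M = num_classes (lattice_rel (B - Y))"
    unfolding reidemeister_number_def reidemeister_rel_eq_lattice_rel[OF C] ..
  also have "\<dots> = abs_inf (of_int (det (B - Y)))"
    by (rule num_classes_lattice_rel)
  also have "of_int (det (B - Y)) = of_int (det B) * det (mat 1 - M)"
    by (metis C det_mul det_qmat mult.commute)
  finally show ?thesis
    by (simp add: abs_inf_mult lattice_index_eq_abs_inf_det)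
qed

end
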